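(* Let $A'B'C'D'$ be a tangential quadrilateral in the $uv$-plane, lying in the upper half-plane $v>0$, such that the lines $A'B'$ and $C'D'$ meet at $O=(0,0)$ and the lines $B'C'$ and $D'A'$ meet at $P=(1,0)$, where $O$ lies on ray $A'B'$ beyond $B'$ and on ray $D'C'$ beyond $C'$, and $P$ lies on ray $A'D'$ beyond $D'$ and on ray $B'C'$ beyond $C'$ (so that $\angle A'+\angle B'<\pi$ and $\angle A'+\angle D'<\pi$). Then for every $a>1$ there exist real numbers $x,y,l$ with $x+y>0$ and $l>0$ such that, with $T$ the map defined below (for this $a$), $$T(x,y)=A',\quad T(x+l,y)=B',\quad T(x+l,y+l)=C',\quad T(x,y+l)=D'.$$
   Context: For fixed $a>1$, $T$ is the map defined on $\{(x,y):x+y\neq0\}$ by $T(x,y)=(f(x,y),g(x,y))$ with $$f(x,y)=\frac{a^x(a^{2y}-1)}{(a^x+a^y)(a^{x+y}-1)},\qquad g(x,y)=\frac{2a^{x+y}}{(a^x+a^y)(a^{x+y}-1)}.$$ A quadrilateral is tangential if it admits an inscribed circle tangent to all four sides; equivalently, the sums of the lengths of the two pairs of opposite sides are equal. Every tangential quadrilateral with no pair of parallel sides can be brought into the position described (lines of opposite sides meeting at $O$ and $P$ as specified, in the upper half-plane) by a similarity and a suitable labelling of its vertices. *)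

theory Defs
  imports "HOL-Analysis.Analysis"
begin

text \<open>Points of the uv-plane are pairs (u,v) :: real \<times> real; the HOL-Analysis norm on
  pairs is the Euclidean one.\<close>

definition Tf :: "real \<Rightarrow> real \<Rightarrow> real \<Rightarrow> real" where
  "Tf a x y = (a powr x * (a powr (2*y) - 1)) / ((a powr x + a powr y) * (a powr (x+y) - 1))"

definition Tg :: "real \<Rightarrow> real \<Rightarrow> real \<Rightarrow> real" where
  "Tg a x y = (2 * a powr (x+y)) / ((a powr x + a powr y) * (a powr (x+y) - 1))"

definition T :: "real \<Rightarrow> real \<Rightarrow> real \<Rightarrow> real \<times> real" where
  "T a x y = (Tf a x y, Tg a x y)"

definition tangential_quad :: "real \<times> real \<Rightarrow> real \<times> real \<Rightarrow> real \<times> real \<Rightarrow> real \<times> real \<Rightarrow> bool" where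
  "tangential_quad A B C D \<longleftrightarrow> dist A B + dist C D = dist B C + dist D A"

definition beyond :: "real \<times> real \<Rightarrow> real \<times> real \<Rightarrow> real \<times> real \<Rightarrow> bool" where
  "beyond X Y Q \<longleftrightarrow> (\<exists>t>1. Q = X + t *\<^sub>R (Y - X))"

end

theory Submission
  imports Defs
begin

text \<open>With \<open>p = a powr x\<close> and \<open>q = a powr y\<close> the map \<open>T\<close> becomes the rational map \<open>Tpq p q\<close>.
  A point \<open>z = (u,v)\<close> with \<open>v > 0\<close> equals \<open>Tpq p q\<close> for the positive \<open>p, q\<close> with
  \<open>q - 1/q = 2u/v\<close> and \<open>p - 1/p = 2(1-u)/v\<close>, i.e. \<open>q\<close> and \<open>p\<close> are the cotangents of the half angles of \<open>z\<close> seen from \<open>O\<close> and from \<open>P\<close>. Hence lines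
  through \<open>O\<close> and through \<open>P\<close> are coordinate lines, and the quadrilateral is the image of a
  rectangle \<open>[p1,p2] \<times> [q2,q1]\<close>; it is a square in the logarithmic coordinates iff
  \<open>p2 q1 = p1 q2\<close>. The distances to \<open>O\<close> and \<open>P\<close> have sum \<open>(pq+1)/(pq-1)\<close> and difference
  \<open>(q-p)/(q+p)\<close>, and since consecutive vertices lie on a common ray from \<open>O\<close> or \<open>P\<close>, the
  tangency condition becomes an identity between these quantities, which factors as
  \<open>(p2 q1 - p1 q2)\<close> times a positive number.\<close>

definition Tpq :: "real \<Rightarrow> real \<Rightarrow> real \<times> real" where
  "Tpq p q = (p*(q^2-1) / ((p+q)*(p*q-1)), 2*p*q / ((p+q)*(p*q-1)))"

lemma T_eq_Tpq: "a > 0 \<Longrightarrow> T a x y = Tpq (a powr x) (a powr y)"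
  by (simp add: T_def Tf_def Tg_def Tpq_def powr_add power2_eq_square flip: powr_add)

definition mirror :: "real \<times> real \<Rightarrow> real \<times> real" where
  "mirror z = (1 - fst z, snd z)"

lemma dist_P_eq_norm_mirror: "dist z (1,0) = norm (mirror z)"
  by (cases z) (simp add: mirror_def dist_Pair_Pair dist_real_def norm_Pair power2_commute)

lemma mirror_Tpq:
  assumes "(p+q)*(p*q-1) \<noteq> 0"
  shows "mirror (Tpq p q) = Tpq q p"
proof -
  have "1 - p*(q^2-1) / ((p+q)*(p*q-1)) = q*(p^2-1) / ((q+p)*(q*p-1))"
    using assms by (simp add: field_simps power2_eq_square)
  then show ?thesis
    by (simp add: mirror_def Tpq_def algebra_simps)
qed

lemma norm_Tpq:
  assumes "p > 0" "q > 0" "p*q > 1"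
  shows "norm (Tpq p q) = ((p*q+1)/(p*q-1) + (q-p)/(q+p)) / 2"
proof -
  define D where "D = (p+q)*(p*q-1)"
  have "D > 0" using assms by (simp add: D_def)
  have "(p*(q^2-1))^2 + (2*p*q)^2 = (p*(q^2+1))^2"
    by (simp add: power2_eq_square algebra_simps)
  then have "(p*(q^2-1) / D)^2 + (2*p*q / D)^2 = (p*(q^2+1) / D)^2"
    by (simp add: power_divide add_divide_distrib[symmetric])
  then have "norm (Tpq p q) = p*(q^2+1) / D"
    using \<open>D > 0\<close> assms
    by (simp add: Tpq_def D_def[symmetric] norm_Pair power_divide real_sqrt_divide)
  also have "\<dots> = ((p*q+1)*(q+p) + (q-p)*(p*q-1)) / D / 2"
    by (simp add: algebra_simps power2_eq_square add_divide_distrib)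
  also have "\<dots> = ((p*q+1)/(p*q-1) + (q-p)/(q+p)) / 2"
    using assms by (simp add: D_def add_frac_eq mult.commute)
  finally show ?thesis .
qed

lemma dist_Tpq_P:
  assumes "p > 0" "q > 0" "p*q > 1"
  shows "dist (Tpq p q) (1,0) = ((p*q+1)/(p*q-1) - (q-p)/(q+p)) / 2"
proof -
  have "(p-q)/(q+p) = - ((q-p)/(q+p))"
    by (simp add: minus_divide_left)
  then show ?thesis
    using assms norm_Tpq[of q p]
    by (simp add: dist_P_eq_norm_mirror mirror_Tpq mult.commute add.commute)
qed

lemma Tpq_eqI:
  assumes pos: "p > 0" "q > 0" "v > 0"
    and hq: "q^2 - 1 = 2 * (u/v) * q" and hp: "p^2 - 1 = 2 * ((1-u)/v) * p"
  shows "p*q > 1" and "Tpq p q = (u,v)"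
proof -
  define D where "D = (p+q)*(p*q-1)"
  have hq': "v * (q^2-1) = 2*u*q" and hp': "v * (p^2-1) = 2*(1-u)*p"
    using pos hq hp by simp_all
  have "v * D = q*(v * (p^2-1)) + p*(v * (q^2-1))"
    by (simp add: D_def algebra_simps power2_eq_square)
  also have "\<dots> = 2*p*q"
    unfolding hp' hq' by (simp add: algebra_simps)
  finally have vD: "v * D = 2*p*q" .
  then have "v * D > 0"
    using pos by simp
  then have "D > 0"
    using pos by (simp add: zero_less_mult_iff)
  then show "p*q > 1"
    using pos by (simp add: D_def zero_less_mult_iff)
  have "v * (p*(q^2-1)) = p * (v * (q^2-1))"
    by (simp add: algebra_simps)
  also have "\<dots> = v * (u*D)"
    unfolding hq' using vD by (simp add: algebra_simps)
  finally have "p*(q^2-1) / D = u"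
    using \<open>D > 0\<close> pos by simp
  moreover have "2*p*q / D = v"
    using \<open>D > 0\<close> vD by (simp add: field_simps)
  ultimately show "Tpq p q = (u,v)"
    by (simp add: Tpq_def D_def)
qed

lemma exp_arsinh_squared: "(exp (arsinh c))^2 - 1 = 2 * c * exp (arsinh (c::real))"
proof -
  have "sinh (arsinh c) = c"
    by simp
  then have "exp (arsinh c) - 1 / exp (arsinh c) = 2 * c"
    by (simp add: sinh_def exp_minus')
  then show ?thesis
    by (simp add: power2_eq_square field_simps)
qed

text \<open>\<open>coordO z = cot (\<theta>/2)\<close> where \<open>\<theta>\<close> is the angle at \<open>O\<close> between \<open>OP\<close> and \<open>Oz\<close>, since
  \<open>fst z / snd z = cot \<theta>\<close>; \<open>mirror\<close> exchanges \<open>O\<close> and \<open>P\<close>.\<close>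

definition coordO :: "real \<times> real \<Rightarrow> real" where
  "coordO z = exp (arsinh (fst z / snd z))"

definition coordP :: "real \<times> real \<Rightarrow> real" where
  "coordP z = coordO (mirror z)"

lemma
  assumes "snd z > 0"
  shows coordP_mult_coordO_gt_one: "coordP z * coordO z > 1"
    and Tpq_coordP_coordO: "Tpq (coordP z) (coordO z) = z"
proof -
  have "(coordO z)^2 - 1 = 2 * (fst z / snd z) * coordO z"
    and "(coordP z)^2 - 1 = 2 * ((1 - fst z) / snd z) * coordP z"
    by (simp_all only: coordO_def coordP_def mirror_def fst_conv snd_conv exp_arsinh_squared)
  from Tpq_eqI[OF _ _ assms this] show "coordP z * coordO z > 1" "Tpq (coordP z) (coordO z) = z"
    by (simp_all add: coordO_def coordP_def)
qed

lemma coordO_scaleR: "\<mu> > 0 \<Longrightarrow> coordO (\<mu> *\<^sub>R z) = coordO z"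
  by (simp add: coordO_def)

lemma mirror_towards_P: "mirror ((1,0) + \<mu> *\<^sub>R (z - (1,0))) = \<mu> *\<^sub>R mirror z"
  by (simp add: mirror_def algebra_simps)

lemma coordP_towards_P: "\<mu> > 0 \<Longrightarrow> coordP ((1,0) + \<mu> *\<^sub>R (z - (1,0))) = coordP z"
  by (simp add: coordP_def mirror_towards_P coordO_scaleR)

lemma coordP_less_scaleR:
  assumes "snd z > 0" "0 < \<mu>" "\<mu> < 1"
  shows "coordP z < coordP (\<mu> *\<^sub>R z)"
proof -
  have "(1 - \<mu> * fst z) / (\<mu> * snd z) - (1 - fst z) / snd z = (1 - \<mu>) / (\<mu> * snd z)"
    using assms by (simp add: field_simps)
  also have "\<dots> > 0"
    using assms by simp
  finally show ?thesis
    by (simp add: coordP_def coordO_def mirror_def)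
qed

lemma beyond_imp_between:
  assumes "beyond X Y Q"
  shows "\<exists>\<mu>. 0 < \<mu> \<and> \<mu> < 1 \<and> Y = Q + \<mu> *\<^sub>R (X - Q)"
proof -
  obtain t where "t > 1" and Q: "Q = X + t *\<^sub>R (Y - X)"
    using assms by (auto simp: beyond_def)
  have "Y = Q + (1 - 1/t) *\<^sub>R (X - Q)"
    using \<open>t > 1\<close> unfolding Q by (simp add: prod_eq_iff field_simps)
  moreover have "0 < 1 - 1/t" "1 - 1/t < 1"
    using \<open>t > 1\<close> by simp_all
  ultimately show ?thesis
    by blast
qed

lemma beyond_origin_imp_scaleR:
  assumes "beyond X Y (0,0)"
  shows "\<exists>s. 0 < s \<and> s < 1 \<and> Y = s *\<^sub>R X"
  using beyond_imp_between[OF assms] by (auto simp flip: zero_prod_def)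

lemma dist_between:
  fixes X Q :: "'a::real_normed_vector"
  assumes "Y = Q + \<mu> *\<^sub>R (X - Q)" "0 \<le> \<mu>" "\<mu> \<le> 1"
  shows "dist X Y = dist X Q - dist Y Q"
proof -
  have "X - Y = (1 - \<mu>) *\<^sub>R (X - Q)" and "Y - Q = \<mu> *\<^sub>R (X - Q)"
    using assms(1) by (simp_all add: algebra_simps)
  then have "dist X Y = (1 - \<mu>) * dist X Q" and "dist Y Q = \<mu> * dist X Q"
    using assms(2,3) by (simp_all add: dist_norm)
  then show ?thesis
    by (simp add: algebra_simps)
qed

lemma tangential_quad_radial_balance:
  assumes tang: "tangential_quad A B C D"
    and O1: "beyond A B (0,0)" and O2: "beyond D C (0,0)"
    and P1: "beyond A D (1,0)" and P2: "beyond B C (1,0)"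
  shows "norm A - norm B + (norm D - norm C)
    = dist B (1,0) - dist C (1,0) + (dist A (1,0) - dist D (1,0))"
proof -
  obtain sB sC tC tD where
    "0 < sB" "sB < 1" "B = sB *\<^sub>R A" and "0 < sC" "sC < 1" "C = sC *\<^sub>R D" and
    "0 < tC" "tC < 1" "C = (1,0) + tC *\<^sub>R (B - (1,0))" and
    "0 < tD" "tD < 1" "D = (1,0) + tD *\<^sub>R (A - (1,0))"
    using O1 O2 P1 P2 by (meson beyond_origin_imp_scaleR beyond_imp_between)
  then have "dist A B = norm A - norm B" "dist D C = norm D - norm C"
    "dist B C = dist B (1,0) - dist C (1,0)" "dist A D = dist A (1,0) - dist D (1,0)"
    using dist_between[of B 0 sB A] dist_between[of C 0 sC D]
      dist_between[of C "(1,0)" tC B] dist_between[of D "(1,0)" tD A]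
    by simp_all
  then show ?thesis
    using tang dist_commute[of C D] dist_commute[of D A] unfolding tangential_quad_def by linarith
qed

lemma Tpq_sides_balance_imp_square:
  assumes vertices: "A = Tpq p1 q1" "B = Tpq p2 q1" "C = Tpq p2 q2" "D = Tpq p1 q2"
    and pos: "p1 > 0" "p2 > 0" "q1 > 0" "q2 > 0"
    and gt1: "p1*q1 > 1" "p2*q1 > 1" "p1*q2 > 1" "p2*q2 > 1"
    and balance: "norm A - norm B + (norm D - norm C)
      = dist B (1,0) - dist C (1,0) + (dist A (1,0) - dist D (1,0))"
  shows "p2*q1 = p1*q2"
proof -
  let ?d = "p2*q1 - p1*q2"
  have "(q1-p1)/(q1+p1) - (q2-p2)/(q2+p2) + ((p1*q2+1)/(p1*q2-1) - (p2*q1+1)/(p2*q1-1)) = 0"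
    using balance
    unfolding vertices norm_Tpq[OF pos(1,3) gt1(1)] norm_Tpq[OF pos(2,3) gt1(2)]
      norm_Tpq[OF pos(1,4) gt1(3)] norm_Tpq[OF pos(2,4) gt1(4)]
      dist_Tpq_P[OF pos(1,3) gt1(1)] dist_Tpq_P[OF pos(2,3) gt1(2)]
      dist_Tpq_P[OF pos(1,4) gt1(3)] dist_Tpq_P[OF pos(2,4) gt1(4)]
    by argo
  moreover have "(q1-p1)/(q1+p1) - (q2-p2)/(q2+p2) = 2*?d / ((q1+p1)*(q2+p2))"
    using pos by (simp add: diff_frac_eq) (simp add: algebra_simps)
  moreover have "(p1*q2+1)/(p1*q2-1) - (p2*q1+1)/(p2*q1-1) = 2*?d / ((p1*q2-1)*(p2*q1-1))"
    using gt1 by (simp add: diff_frac_eq) (simp add: algebra_simps)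
  ultimately have "?d * (2 / ((q1+p1)*(q2+p2)) + 2 / ((p1*q2-1)*(p2*q1-1))) = 0"
    by (simp add: algebra_simps)
  moreover have "2 / ((q1+p1)*(q2+p2)) + 2 / ((p1*q2-1)*(p2*q1-1)) > 0"
    using pos gt1 by (intro add_pos_pos divide_pos_pos mult_pos_pos) auto
  ultimately show ?thesis by simp
qed

lemma quadrilateral_Tpq_coordinates:
  assumes upper: "snd A > 0" "snd B > 0" "snd C > 0" "snd D > 0"
    and O1: "beyond A B (0,0)" and O2: "beyond D C (0,0)"
    and P1: "beyond A D (1,0)" and P2: "beyond B C (1,0)"
  obtains p1 p2 q1 q2 where
    "A = Tpq p1 q1" "B = Tpq p2 q1" "C = Tpq p2 q2" "D = Tpq p1 q2"
    "p1 > 0" "p2 > 0" "q1 > 0" "q2 > 0"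
    "p1*q1 > 1" "p2*q1 > 1" "p1*q2 > 1" "p2*q2 > 1" "p1 < p2"
proof
  obtain sB sC tC tD where B: "B = sB *\<^sub>R A" "0 < sB" "sB < 1" and C: "C = sC *\<^sub>R D" "0 < sC"
    and C': "C = (1,0) + tC *\<^sub>R (B - (1,0))" "0 < tC"
    and D: "D = (1,0) + tD *\<^sub>R (A - (1,0))" "0 < tD"
    using O1 O2 P1 P2 by (meson beyond_origin_imp_scaleR beyond_imp_between)
  have coords: "coordO B = coordO A" "coordO C = coordO D" "coordP D = coordP A" "coordP C = coordP B"
    using coordO_scaleR[OF B(2), of A] coordO_scaleR[OF C(2), of D]
      coordP_towards_P[OF D(2), of A] coordP_towards_P[OF C'(2), of B]
    by (simp_all flip: B(1) C(1) D(1) C'(1))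
  show "coordP A < coordP B"
    using coordP_less_scaleR[OF upper(1) B(2,3)] B(1) by simp
  show "coordP A > 0" "coordP B > 0" "coordO A > 0" "coordO D > 0"
    by (simp_all add: coordP_def coordO_def)
  show "coordP A * coordO A > 1" "coordP B * coordO A > 1"
    "coordP A * coordO D > 1" "coordP B * coordO D > 1"
    using upper(1,2,3,4)[THEN coordP_mult_coordO_gt_one] by (simp_all only: coords)
  show "A = Tpq (coordP A) (coordO A)" "B = Tpq (coordP B) (coordO A)"
    "C = Tpq (coordP B) (coordO D)" "D = Tpq (coordP A) (coordO D)"
    using upper(1,2,3,4)[THEN Tpq_coordP_coordO] by (simp_all only: coords)
qed

lemma T_square_of_Tpq:
  assumes "a > 1" "p1 > 0" "q1 > 0" "p1*q1 > 1" "p1 < p2" "p2*q1 = p1*q2"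
  shows "\<exists>x y l. x + y > 0 \<and> l > 0 \<and> T a x y = Tpq p1 q1 \<and> T a (x+l) y = Tpq p2 q1
           \<and> T a (x+l) (y+l) = Tpq p2 q2 \<and> T a x (y+l) = Tpq p1 q2"
proof (intro exI conjI)
  define l where "l = log a p2 - log a p1"
  have "p2 > 0"
    using assms by linarith
  then have "p1 * q2 > 0"
    using assms(3,6) by (metis mult_pos_pos)
  then have "q2 > 0"
    using assms(2) by (simp add: zero_less_mult_iff)
  have "log a p2 + log a q1 = log a p1 + log a q2"
    using assms(2,3,6) \<open>p2 > 0\<close> \<open>q2 > 0\<close> by (metis log_mult_pos)
  then have xl: "log a p1 + l = log a p2" and yl: "log a q1 + l = log a q2"
    by (simp_all add: l_def)
  have T_log: "T a (log a p) (log a q) = Tpq p q" if "p > 0" "q > 0" for p q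
    using assms(1) that by (simp add: T_eq_Tpq)
  show "log a p1 + log a q1 > 0"
    using assms(1-4) by (simp flip: log_mult_pos)
  show "l > 0"
    using assms by (simp add: l_def)
  show "T a (log a p1) (log a q1) = Tpq p1 q1" "T a (log a p1 + l) (log a q1) = Tpq p2 q1"
    "T a (log a p1 + l) (log a q1 + l) = Tpq p2 q2" "T a (log a p1) (log a q1 + l) = Tpq p1 q2"
    unfolding xl yl using assms \<open>p2 > 0\<close> \<open>q2 > 0\<close> by (simp_all add: T_log)
qed

theorem theorem6p2:
  fixes A B C D :: "real \<times> real" and a :: real
  assumes tang: "tangential_quad A B C D"
    and upper: "snd A > 0" "snd B > 0" "snd C > 0" "snd D > 0"
    and O1: "beyond A B (0,0)" and O2: "beyond D C (0,0)"
    and P1: "beyond A D (1,0)" and P2: "beyond B C (1,0)"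
    and a: "a > 1"
  shows "\<exists>x y l. x + y > 0 \<and> l > 0 \<and> T a x y = A \<and> T a (x+l) y = B
                 \<and> T a (x+l) (y+l) = C \<and> T a x (y+l) = D"
proof -
  obtain p1 p2 q1 q2 where vertices: "A = Tpq p1 q1" "B = Tpq p2 q1" "C = Tpq p2 q2" "D = Tpq p1 q2"
    and pos: "p1 > 0" "p2 > 0" "q1 > 0" "q2 > 0"
    and gt1: "p1*q1 > 1" "p2*q1 > 1" "p1*q2 > 1" "p2*q2 > 1" and "p1 < p2"
    using quadrilateral_Tpq_coordinates[OF upper O1 O2 P1 P2] .
  have square: "p2*q1 = p1*q2"
    using Tpq_sides_balance_imp_square[OF vertices pos gt1]
      tangential_quad_radial_balance[OF tang O1 O2 P1 P2] .
  show ?thesis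
    using T_square_of_Tpq[OF a pos(1,3) gt1(1) \<open>p1 < p2\<close> square] by (simp only: vertices)
qed

end
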